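(* In the M/G/1 setting below: (i) For a fixed fee $p\in[0,R-C/\mu)$: (a) if $\lambda\le\mathbb{E}[\Lambda]$, then $\mathrm{Rev}^S(p)\le\mathrm{Rev}^C(p)$; (b) if $\mathbb{E}[\Lambda]<\lambda\le\bar\lambda$ and $\xi(p)\ge\lambda$, then $\mathrm{Rev}^S(p)\le\mathrm{Rev}^C(p)$; (c) if $\lambda>\bar\lambda$ and $\xi(p)\ge\bar\lambda$, then $\mathrm{Rev}^S(p)\ge\mathrm{Rev}^C(p)$. (ii) As functions of the joining probability $q$: if $\lambda>\mathbb{E}[\Lambda]$, there exists $q_0>0$ such that $\mathrm{Rev}^S(q)>\mathrm{Rev}^C(q)$ for all $q\in(0,q_0)$; if $\lambda<\mathbb{E}[\Lambda]$, there exists $q_0>0$ such that $\mathrm{Rev}^S(q)<\mathrm{Rev}^C(q)$ for all $q\in(0,q_0)$.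
   Context: Setting: an M/G/1 queue with true (deterministic) Poisson arrival rate $\lambda>0$ and i.i.d. service times $S$ with $\mathbb{E}[S]=1/\mu$, $\mathbb{E}[S^2]=s^2$; for $0\le x<\mu$, $W(x)=\frac{s^2x}{2(1-x/\mu)}+\frac1\mu$ is the expected time in system at effective arrival rate $x$. Each served customer receives reward $R$, pays fee $p$, and incurs waiting cost $C>0$ per unit time, with $R\ge C/\mu$. Customers' beliefs about the arrival rate are described by a non-degenerate nonnegative random variable $\Lambda$ whose support has minimum $\lambda_{\min}$ and maximum $\lambda_{\max}$, with $0\le\lambda_{\min}<\lambda<\lambda_{\max}<\mu$. For $0\le p<R-C/\mu$, $\xi(p)\in(0,\mu)$ is the unique solution of $W(\xi)=(R-p)/C$, i.e. $\xi(p)=\left(\frac{Cs^2}{2(R-p-C/\mu)}+\frac1\mu\right)^{-1}$. Classical case: $q^C(p)=\min\{\xi(p)/\lambda,1\}$ and $\mathrm{Rev}^C(p)=p\lambda q^C(p)$. Shared belief case: $q^S(p)=1$ if $C\,\mathbb{E}[W(\Lambda)]\le R-p$, otherwise $q^S(p)$ is the unique $q\in[0,1)$ with $C\,\mathbb{E}[W(q\Lambda)]=R-p$; $\mathrm{Rev}^S(p)=p\lambda q^S(p)$. The threshold $\bar\lambda\in[0,\mu)$ is defined by $W(\bar\lambda)=\mathbb{E}[W(\Lambda)]$ (so $q^S(p)=1$ iff $\xi(p)\ge\bar\lambda$). As functions of $q\in[0,1]$: $\mathrm{Rev}^C(q)=q\lambda(R-C\,W(q\lambda))$ and $\mathrm{Rev}^S(q)=q\lambda\,\mathbb{E}[R-C\,W(q\Lambda)]$.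 *)

theory Defs
  imports "HOL-Probability.Probability"
begin

text \<open>Expected time in system at effective arrival rate x (M/G/1, Pollaczek-Khinchine).
  s2 = E[S^2], mu = 1/E[S].\<close>
definition W :: "real \<Rightarrow> real \<Rightarrow> real \<Rightarrow> real" where
  "W s2 mu x = s2 * x / (2 * (1 - x / mu)) + 1 / mu"

text \<open>xi(p): unique solution of W(xi) = (R - p)/C, given in closed form.\<close>
definition xi :: "real \<Rightarrow> real \<Rightarrow> real \<Rightarrow> real \<Rightarrow> real \<Rightarrow> real" where
  "xi s2 mu R C p = inverse (C * s2 / (2 * (R - p - C / mu)) + 1 / mu)"

definition dist_support :: "real measure \<Rightarrow> real set" where
  "dist_support D = {x. \<forall>e>0. measure D {x - e <..< x + e} > 0}"

definition qC :: "real \<Rightarrow> real \<Rightarrow> real \<Rightarrow> real \<Rightarrow> real \<Rightarrow> real \<Rightarrow> real" where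
  "qC s2 mu R C lam p = min (xi s2 mu R C p / lam) 1"

definition RevC :: "real \<Rightarrow> real \<Rightarrow> real \<Rightarrow> real \<Rightarrow> real \<Rightarrow> real \<Rightarrow> real" where
  "RevC s2 mu R C lam p = p * lam * qC s2 mu R C lam p"

text \<open>Shared-belief joining probability and revenue; D is the distribution of Lambda.\<close>
definition qS :: "real \<Rightarrow> real \<Rightarrow> real \<Rightarrow> real \<Rightarrow> real measure \<Rightarrow> real \<Rightarrow> real" where
  "qS s2 mu R C D p =
     (if C * (\<integral>x. W s2 mu x \<partial>D) \<le> R - p then 1
      else (THE q. 0 \<le> q \<and> q < 1 \<and> C * (\<integral>x. W s2 mu (q * x) \<partial>D) = R - p))"

definition RevS :: "real \<Rightarrow> real \<Rightarrow> real \<Rightarrow> real \<Rightarrow> real \<Rightarrow> real measure \<Rightarrow> real \<Rightarrow> real" where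
  "RevS s2 mu R C lam D p = p * lam * qS s2 mu R C D p"

definition lambda_bar :: "real \<Rightarrow> real \<Rightarrow> real measure \<Rightarrow> real" where
  "lambda_bar s2 mu D = (THE l. 0 \<le> l \<and> l < mu \<and> W s2 mu l = (\<integral>x. W s2 mu x \<partial>D))"

definition RevCq :: "real \<Rightarrow> real \<Rightarrow> real \<Rightarrow> real \<Rightarrow> real \<Rightarrow> real \<Rightarrow> real" where
  "RevCq s2 mu R C lam q = q * lam * (R - C * W s2 mu (q * lam))"

definition RevSq :: "real \<Rightarrow> real \<Rightarrow> real \<Rightarrow> real \<Rightarrow> real \<Rightarrow> real measure \<Rightarrow> real \<Rightarrow> real" where
  "RevSq s2 mu R C lam D q = q * lam * (\<integral>x. (R - C * W s2 mu (q * x)) \<partial>D)"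

end

theory Submission
  imports Defs
begin

(* W is increasing and convex on [0, mu). Jensen's inequality gives E[W(q Lambda)] >= W(q E[Lambda]);
   for q = 1 this is E[Lambda] <= lambda_bar, and at the shared-belief equilibrium, where
   E[W(q^S Lambda)] = W(xi(p)) unless q^S = 1, it gives q^S E[Lambda] <= xi(p). Comparing with
   q^C = min(xi(p)/lambda, 1) yields (i).
   For (ii), Rev^S(q) - Rev^C(q) = q lambda C (W(q lambda) - E[W(q Lambda)]), and W(q lambda) and
   E[W(q Lambda)] both equal 1/mu + s2/2 q (lambda resp. E[Lambda]) up to O(q^2), so for small q
   the sign is that of lambda - E[Lambda].
   The support hypotheses enter only through Lambda <= lambda_max < mu almost surely, and
   non-degeneracy only through E[Lambda] > 0, which makes q -> E[W(q Lambda)] strictly increasing,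
   so that the THE in the definition of q^S picks the unique root. *)

lemma W_eq:
  assumes "mu \<noteq> 0" "y \<noteq> mu"
  shows "W s2 mu y = s2/2 * (mu^2 / (mu - y) - mu) + 1/mu"
proof -
  have "mu - y \<noteq> 0" using assms by simp
  have "1 - y / mu = (mu - y) / mu" using assms by (simp add: diff_divide_distrib)
  then have "s2 * y / (2 * (1 - y / mu)) = s2/2 * (mu * y / (mu - y))"
    using assms by simp
  also have "mu * y / (mu - y) = mu^2 / (mu - y) - mu"
    using \<open>mu - y \<noteq> 0\<close> by (simp add: field_simps power2_eq_square)
  finally show ?thesis by (simp add: W_def)
qed

lemma W_diff:
  assumes "mu \<noteq> 0" "y1 \<noteq> mu" "y2 \<noteq> mu"
  shows "W s2 mu y2 - W s2 mu y1 = s2/2 * mu^2 * (y2 - y1) / ((mu - y1) * (mu - y2))"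
proof -
  have "mu - y1 \<noteq> 0" "mu - y2 \<noteq> 0" using assms by auto
  have "W s2 mu y2 - W s2 mu y1 = s2/2 * (mu^2 / (mu - y2) - mu^2 / (mu - y1))"
    using assms by (simp add: W_eq algebra_simps)
  also have "mu^2 / (mu - y2) - mu^2 / (mu - y1) = mu^2 * (y2 - y1) / ((mu - y1) * (mu - y2))"
    using \<open>mu - y1 \<noteq> 0\<close> \<open>mu - y2 \<noteq> 0\<close> by (simp add: field_simps)
  finally show ?thesis by simp
qed

lemma W_diff_ge:
  assumes "0 < mu" "0 \<le> y1" "y1 \<le> y2" "y2 < mu" "0 \<le> s2"
  shows "s2/2 * (y2 - y1) \<le> W s2 mu y2 - W s2 mu y1"
proof -
  have "(mu - y1) * (mu - y2) \<le> mu^2"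
    using assms by (simp add: power2_eq_square mult_mono)
  then have "(y2 - y1) * ((mu - y1) * (mu - y2)) \<le> mu^2 * (y2 - y1)"
    using assms by (metis diff_ge_0_iff_ge mult.commute mult_left_mono)
  then have "y2 - y1 \<le> mu^2 * (y2 - y1) / ((mu - y1) * (mu - y2))"
    using assms by (simp add: pos_le_divide_eq)
  then have "s2/2 * (y2 - y1) \<le> s2/2 * (mu^2 * (y2 - y1) / ((mu - y1) * (mu - y2)))"
    using assms by (intro mult_left_mono) auto
  then show ?thesis
    using assms by (simp add: W_diff)
qed

lemma W_diff_le:
  assumes "0 < mu" "y1 \<le> y2" "y2 \<le> Y" "Y < mu" "0 \<le> s2"
  shows "W s2 mu y2 - W s2 mu y1 \<le> s2/2 * mu^2 / (mu - Y)^2 * (y2 - y1)"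
proof -
  have "(mu - Y)^2 \<le> (mu - y1) * (mu - y2)"
    using assms by (simp add: power2_eq_square mult_mono)
  then have "s2/2 * mu^2 * (y2 - y1) / ((mu - y1) * (mu - y2)) \<le> s2/2 * mu^2 * (y2 - y1) / (mu - Y)^2"
    using assms by (intro divide_left_mono) auto
  then show ?thesis
    using assms by (simp add: W_diff)
qed

lemma strict_mono_on_W:
  assumes "0 < mu" "0 < s2"
  shows "strict_mono_on {0..<mu} (W s2 mu)"
proof (rule strict_mono_onI)
  fix y1 y2 assume y: "y1 \<in> {0..<mu}" "y2 \<in> {0..<mu}" "y1 < y2"
  have "s2/2 * (y2 - y1) \<le> W s2 mu y2 - W s2 mu y1"
    by (rule W_diff_ge) (use assms y in auto)
  moreover have "0 < s2/2 * (y2 - y1)" using assms y by simp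
  ultimately show "W s2 mu y1 < W s2 mu y2" by linarith
qed

lemma W_ge_linear:
  assumes "0 < mu" "0 \<le> y" "y < mu" "0 \<le> s2"
  shows "s2/2 * y + 1/mu \<le> W s2 mu y"
  using W_diff_ge[of mu 0 y s2] assms by (simp add: W_def)

lemma W_le_quadratic:
  assumes "0 < mu" "0 \<le> y" "y \<le> Y" "Y < mu" "0 \<le> s2"
  shows "W s2 mu y \<le> s2/2 * (y + y^2 / (mu - Y)) + 1/mu"
proof -
  have "W s2 mu y = s2/2 * (y + y^2 / (mu - y)) + 1/mu"
    using assms by (simp add: W_eq field_simps power2_eq_square)
  moreover have "y^2 / (mu - y) \<le> y^2 / (mu - Y)"
    using assms by (intro divide_left_mono) auto
  ultimately show ?thesis
    using assms by (simp add: mult_left_mono)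
qed

lemma W_mult_le_quadratic:
  assumes "0 < mu" "0 \<le> s2" "0 \<le> q" "q \<le> 1" "0 \<le> x" "x \<le> Y" "Y < mu"
  shows "W s2 mu (q * x) \<le> s2/2 * (q * x + q^2 * (Y^2 / (mu - Y))) + 1/mu"
proof -
  have "q * x \<le> Y" using assms by (meson mult_left_le_one_le order_trans)
  then have "W s2 mu (q * x) \<le> s2/2 * (q * x + (q * x)^2 / (mu - Y)) + 1/mu"
    using assms by (intro W_le_quadratic) auto
  also have "(q * x)^2 / (mu - Y) \<le> q^2 * (Y^2 / (mu - Y))"
    using assms by (simp add: power_mult_distrib divide_right_mono mult_left_mono power_mono)
  finally show ?thesis
    using assms by (simp add: mult_left_mono)
qed

lemma convex_on_cong:
  assumes "S = T" "\<And>x. x \<in> T \<Longrightarrow> f x = g x"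
  shows "convex_on S f = convex_on T g"
  using assms by (auto simp: convex_on_def convex_def)

lemma convex_on_inverse_diff: "convex_on {..<a} (\<lambda>y. inverse (a - y :: real))"
proof (rule convex_onI)
  fix t x y :: real
  assume "0 < t" "t < 1" "x \<in> {..<a}" "y \<in> {..<a}"
  then have "inverse ((1 - t) *\<^sub>R (a - x) + t *\<^sub>R (a - y)) \<le> (1 - t) * inverse (a - x) + t * inverse (a - y)"
    by (intro convex_onD[OF convex_on_inverse[of "{0<..}"]]) auto
  then show "inverse (a - ((1 - t) *\<^sub>R x + t *\<^sub>R y)) \<le> (1 - t) * inverse (a - x) + t * inverse (a - y)"
    by (simp add: algebra_simps)
qed simp

lemma convex_on_W:
  assumes "0 < mu" "0 \<le> s2"
  shows "convex_on {..<mu} (W s2 mu)"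
proof -
  have "convex_on {..<mu} (\<lambda>y. s2/2 * mu^2 * inverse (mu - y))"
    using assms by (intro convex_on_cmul convex_on_inverse_diff) simp
  then have conv: "convex_on {..<mu} (\<lambda>y. s2/2 * mu^2 * inverse (mu - y) + (1/mu - s2/2 * mu))"
    by (rule convex_on_add) (simp add: convex_on_const)
  have eq: "s2/2 * mu^2 * inverse (mu - y) + (1/mu - s2/2 * mu) = W s2 mu y" if "y \<in> {..<mu}" for y
  proof -
    have "W s2 mu y = s2/2 * (mu^2 / (mu - y) - mu) + 1/mu"
      using assms that by (intro W_eq) auto
    then show ?thesis
      by (simp add: inverse_eq_divide right_diff_distrib)
  qed
  show ?thesis
    by (rule iffD1[OF convex_on_cong[OF refl eq] conv])
qed

lemma continuous_on_W:
  assumes "0 < mu" "0 \<le> s2"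
  shows "continuous_on {..<mu} (W s2 mu)"
  using convex_on_W[OF assms] by (intro convex_on_continuous) auto

lemma xi_root:
  assumes "0 < C" "0 < mu" "0 < s2" "p < R - C/mu"
  shows "0 < xi s2 mu R C p \<and> xi s2 mu R C p < mu \<and> C * W s2 mu (xi s2 mu R C p) = R - p"
proof -
  define b where "b = R - p - C/mu"
  define d where "d = C * s2 * mu + 2 * b"
  have "0 < b" using assms by (simp add: b_def)
  have "0 < C * s2 * mu" using assms by simp
  then have "0 < d" "2 * b < d" using \<open>0 < b\<close> by (simp_all add: d_def)
  have "C * s2 / (2 * b) + 1/mu = d / (2 * b * mu)"
    using \<open>0 < b\<close> assms unfolding d_def by (simp add: add_divide_distrib)
  then have xi: "xi s2 mu R C p = 2 * b * mu / d"
    by (simp add: xi_def b_def)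
  have "1 - (2 * b * mu / d) / mu = (d - 2 * b) / d"
    using \<open>0 < d\<close> assms by (simp add: field_simps)
  also have "d - 2 * b = C * s2 * mu"
    by (simp add: d_def)
  finally have "1 - (2 * b * mu / d) / mu = C * s2 * mu / d" .
  then have "W s2 mu (xi s2 mu R C p) = b / C + 1/mu"
    using \<open>0 < d\<close> \<open>0 < b\<close> assms unfolding xi W_def by simp
  moreover have "2 * b * mu / d < mu"
    using \<open>2 * b < d\<close> \<open>0 < d\<close> assms by (simp add: divide_less_eq)
  ultimately show ?thesis
    using \<open>0 < b\<close> \<open>0 < d\<close> assms unfolding xi by (simp add: b_def distrib_left)
qed

lemma null_sets_open_disjoint_dist_support:
  fixes D :: "real measure"
  assumes "finite_measure D" "sets D = sets borel" "open U" "U \<inter> dist_support D = {}"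
  shows "U \<in> null_sets D"
proof -
  interpret finite_measure D by fact
  define N where "N = {B. open B \<and> B \<in> null_sets D}"
  have "U \<subseteq> \<Union>N"
  proof
    fix y assume "y \<in> U"
    then have "y \<notin> dist_support D" using assms(4) by blast
    then obtain e where "0 < e" "\<not> 0 < measure D {y - e<..<y + e}"
      unfolding dist_support_def by auto
    then have "emeasure D {y - e<..<y + e} = 0"
      using measure_nonneg[of D] by (simp add: emeasure_eq_measure not_less antisym)
    then have "{y - e<..<y + e} \<in> N"
      using assms(2) by (auto simp: N_def null_sets_def)
    moreover have "y \<in> {y - e<..<y + e}" using \<open>0 < e\<close> by simp
    ultimately show "y \<in> \<Union>N" by blast
  qed
  obtain N' where "N' \<subseteq> N" "countable N'" "\<Union>N' = \<Union>N"
    using Lindelof[of N] by (auto simp: N_def)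
  then have "\<Union>N \<in> null_sets D"
    using null_sets_UN'[of N' "\<lambda>B. B" D] by (auto simp: N_def)
  moreover have "U \<in> sets D" using assms(2,3) by simp
  ultimately show ?thesis using \<open>U \<subseteq> \<Union>N\<close> null_sets_subset by blast
qed

lemma AE_le_of_dist_support_le:
  fixes D :: "real measure"
  assumes "finite_measure D" "sets D = sets borel" "\<forall>x\<in>dist_support D. x \<le> b"
  shows "AE x in D. x \<le> b"
proof (rule AE_I')
  show "{b<..} \<in> null_sets D"
    using assms by (intro null_sets_open_disjoint_dist_support) auto
qed auto

lemma pos_near_0_of_linear_approx:
  fixes f :: "real \<Rightarrow> real"
  assumes "0 < c" and approx: "\<And>q. 0 < q \<Longrightarrow> q \<le> 1 \<Longrightarrow> \<bar>f q - c * q\<bar> \<le> K * q^2"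
  shows "\<exists>q0\<in>{0<..1}. \<forall>q\<in>{0<..<q0}. 0 < f q"
proof -
  have "0 \<le> K" using approx[of 1] by simp
  define q0 where "q0 = min 1 (c / (K + 1))"
  have "0 < f q" if "0 < q" "q < q0" for q
  proof -
    have "q * (K + 1) < c"
      using that \<open>0 \<le> K\<close> by (simp add: q0_def less_divide_eq)
    then have "K * q * q < c * q"
      using that by (intro mult_strict_right_mono) (auto simp: algebra_simps)
    moreover have "c * q - K * q^2 \<le> f q"
      using approx[of q] that by (simp add: q0_def abs_le_iff)
    ultimately show ?thesis by (simp add: power2_eq_square mult.assoc)
  qed
  moreover have "q0 \<in> {0<..1}" using \<open>0 < c\<close> \<open>0 \<le> K\<close> by (simp add: q0_def)
  ultimately show ?thesis by (intro bexI[of _ q0]) auto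
qed

locale mg1_beliefs = prob_space D for D :: "real measure" +
  fixes s2 mu lmax :: real
  assumes sets_D: "sets D = sets borel"
    and s2_pos: "0 < s2" and mu_pos: "0 < mu" and lmax_less_mu: "lmax < mu"
    and AE_range: "AE x in D. 0 \<le> x \<and> x \<le> lmax"
    and not_AE_zero: "\<not> (AE x in D. x = 0)"
begin

definition EW :: "real \<Rightarrow> real" where
  "EW q = expectation (\<lambda>x. W s2 mu (q * x))"

abbreviation mean :: real where
  "mean \<equiv> expectation (\<lambda>x. x)"

lemma lmax_nonneg: "0 \<le> lmax"
proof -
  have "AE x in D. 0 \<le> lmax" using AE_range by eventually_elim auto
  then show ?thesis by simp
qed

lemma mult_mem_range:
  assumes "0 \<le> q" "q \<le> 1" "0 \<le> x" "x \<le> lmax"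
  shows "0 \<le> q * x" "q * x \<le> lmax"
  using assms by (auto intro: order_trans[OF mult_left_le_one_le])

lemma integrable_id: "integrable D (\<lambda>x. x)"
proof (rule integrable_const_bound[where B = lmax])
  show "AE x in D. norm x \<le> lmax" using AE_range by eventually_elim auto
qed (simp add: measurable_cong_sets[OF sets_D refl])

lemma integrable_W:
  assumes "0 \<le> q" "q \<le> 1"
  shows "integrable D (\<lambda>x. W s2 mu (q * x))"
proof (rule integrable_const_bound[where B = "W s2 mu lmax"])
  show "AE x in D. norm (W s2 mu (q * x)) \<le> W s2 mu lmax"
    using AE_range
  proof eventually_elim
    case (elim x)
    then have qx: "0 \<le> q * x" "q * x \<le> lmax" using assms mult_mem_range by auto
    have "s2/2 * (q * x) + 1/mu \<le> W s2 mu (q * x)"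
      using qx s2_pos mu_pos lmax_less_mu by (intro W_ge_linear) auto
    moreover have "0 \<le> s2/2 * (q * x) + 1/mu"
      using qx s2_pos mu_pos by simp
    ultimately have "0 \<le> W s2 mu (q * x)" by linarith
    moreover have "W s2 mu (q * x) \<le> W s2 mu lmax"
      using strict_mono_on_leD[OF strict_mono_on_W[OF mu_pos s2_pos]] qx lmax_less_mu by simp
    ultimately show ?case by simp
  qed
  show "(\<lambda>x. W s2 mu (q * x)) \<in> borel_measurable D"
    by (subst measurable_cong_sets[OF sets_D refl]) (unfold W_def, measurable)
qed

lemma expectation_mono_on_range:
  fixes f g :: "real \<Rightarrow> real"
  assumes "integrable D f" "integrable D g" "\<And>x. 0 \<le> x \<Longrightarrow> x \<le> lmax \<Longrightarrow> f x \<le> g x"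
  shows "expectation f \<le> expectation g"
proof (rule integral_mono_AE[OF assms(1,2)])
  show "AE x in D. f x \<le> g x" using AE_range by eventually_elim (use assms(3) in auto)
qed

lemma expectation_affine: "expectation (\<lambda>x. a + b * x) = a + b * mean"
  using integrable_id by (simp add: prob_space)

lemma mean_pos: "0 < mean"
proof -
  have nonneg: "AE x in D. 0 \<le> x" using AE_range by eventually_elim auto
  then have "0 \<le> mean" by (rule integral_nonneg_AE)
  moreover have "mean \<noteq> 0"
    using integral_nonneg_eq_0_iff_AE[OF integrable_id nonneg] not_AE_zero by simp
  ultimately show ?thesis by simp
qed

lemma mean_le_lmax: "mean \<le> lmax"
  using expectation_mono_on_range[OF integrable_id, of "\<lambda>_. lmax"] by (simp add: prob_space)

lemma EW_0: "EW 0 = 1/mu"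
  by (simp add: EW_def W_def prob_space)

lemma EW_diff_ge:
  assumes "0 \<le> q1" "q1 \<le> q2" "q2 \<le> 1"
  shows "s2/2 * (q2 - q1) * mean \<le> EW q2 - EW q1"
proof -
  have "expectation (\<lambda>x. 0 + s2/2 * (q2 - q1) * x) \<le> expectation (\<lambda>x. W s2 mu (q2 * x) - W s2 mu (q1 * x))"
  proof (rule expectation_mono_on_range)
    fix x assume "0 \<le> x" "x \<le> lmax"
    then have "0 \<le> q1 * x" "q1 * x \<le> q2 * x" "q2 * x \<le> lmax"
      using assms mult_mem_range[of q2 x] by (auto intro: mult_right_mono)
    then have "s2/2 * (q2 * x - q1 * x) \<le> W s2 mu (q2 * x) - W s2 mu (q1 * x)"
      using s2_pos mu_pos lmax_less_mu by (intro W_diff_ge) auto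
    then show "0 + s2/2 * (q2 - q1) * x \<le> W s2 mu (q2 * x) - W s2 mu (q1 * x)"
      by (simp only: add_0 mult.assoc left_diff_distrib)
  qed (use integrable_id integrable_W assms in auto)
  then show ?thesis
    using integrable_W assms by (simp add: expectation_affine EW_def)
qed

lemma strict_mono_on_EW: "strict_mono_on {0..1} EW"
proof (rule strict_mono_onI)
  fix q1 q2 :: real assume q: "q1 \<in> {0..1}" "q2 \<in> {0..1}" "q1 < q2"
  then have "s2/2 * (q2 - q1) * mean \<le> EW q2 - EW q1" by (intro EW_diff_ge) auto
  moreover have "0 < s2/2 * (q2 - q1) * mean" using q s2_pos mean_pos by simp
  ultimately show "EW q1 < EW q2" by linarith
qed

lemma EW_ge_linear:
  assumes "0 \<le> q" "q \<le> 1"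
  shows "s2/2 * q * mean + 1/mu \<le> EW q"
  using EW_diff_ge[of 0 q] assms by (simp add: EW_0)

lemma EW_diff_le:
  assumes "0 \<le> q1" "q1 \<le> q2" "q2 \<le> 1"
  shows "EW q2 - EW q1 \<le> s2/2 * mu^2 / (mu - lmax)^2 * lmax * (q2 - q1)"
proof -
  let ?L = "s2/2 * mu^2 / (mu - lmax)^2"
  have "expectation (\<lambda>x. W s2 mu (q2 * x) - W s2 mu (q1 * x)) \<le> expectation (\<lambda>x. ?L * lmax * (q2 - q1) + 0 * x)"
  proof (rule expectation_mono_on_range)
    fix x assume x: "0 \<le> x" "x \<le> lmax"
    then have "q1 * x \<le> q2 * x" "q2 * x \<le> lmax"
      using assms mult_mem_range[of q2 x] by (auto intro: mult_right_mono)
    then have "W s2 mu (q2 * x) - W s2 mu (q1 * x) \<le> ?L * (q2 * x - q1 * x)"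
      using s2_pos mu_pos lmax_less_mu by (intro W_diff_le) auto
    also have "?L * (q2 * x - q1 * x) \<le> ?L * (lmax * (q2 - q1))"
    proof (rule mult_left_mono)
      have "(q2 - q1) * x \<le> (q2 - q1) * lmax" using x assms by (intro mult_left_mono) auto
      then show "q2 * x - q1 * x \<le> lmax * (q2 - q1)" by (simp add: algebra_simps)
    qed (use s2_pos in simp)
    finally show "W s2 mu (q2 * x) - W s2 mu (q1 * x) \<le> ?L * lmax * (q2 - q1) + 0 * x"
      by (simp add: mult.assoc)
  qed (use integrable_W assms in auto)
  then show ?thesis
    using integrable_W assms by (simp add: expectation_affine EW_def prob_space)
qed

lemma continuous_on_EW: "continuous_on {0..1} EW"
proof (rule lipschitz_on_continuous_on)
  let ?K = "s2/2 * mu^2 / (mu - lmax)^2 * lmax"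
  have K: "0 \<le> ?K" using s2_pos lmax_nonneg by simp
  have "dist (EW q1) (EW q2) \<le> ?K * dist q1 q2" if "q1 \<in> {0..1}" "q2 \<in> {0..1}" "q1 \<le> q2" for q1 q2
  proof -
    have "0 \<le> s2/2 * (q2 - q1) * mean" using that s2_pos mean_pos by simp
    then have "EW q1 \<le> EW q2" using that EW_diff_ge[of q1 q2] by simp
    then show ?thesis
      using that EW_diff_le[of q1 q2] by (simp add: dist_real_def)
  qed
  then show "?K-lipschitz_on {0..1} EW"
    using K by (intro lipschitz_onI) (metis dist_commute linear)
qed

lemma W_mean_le_EW:
  assumes "0 \<le> q" "q \<le> 1"
  shows "W s2 mu (q * mean) \<le> EW q"
proof -
  have "W s2 mu (expectation (\<lambda>x. q * x)) \<le> expectation (\<lambda>x. W s2 mu (q * x))"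
  proof (rule jensens_inequality[where I = "{..<mu}" and b = mu])
    show "AE x in D. q * x \<in> {..<mu}"
      using AE_range by eventually_elim (use assms mult_mem_range lmax_less_mu in force)
  qed (use integrable_id integrable_W assms convex_on_W mu_pos s2_pos in auto)
  then show ?thesis by (simp add: EW_def)
qed

lemma EW_le_quadratic:
  assumes "0 \<le> q" "q \<le> 1"
  shows "EW q \<le> s2/2 * (q * mean + q^2 * (lmax^2 / (mu - lmax))) + 1/mu"
proof -
  let ?K = "lmax^2 / (mu - lmax)"
  have "EW q \<le> expectation (\<lambda>x. (s2/2 * q^2 * ?K + 1/mu) + s2/2 * q * x)"
    unfolding EW_def
  proof (rule expectation_mono_on_range)
    fix x assume "0 \<le> x" "x \<le> lmax"
    then have "W s2 mu (q * x) \<le> s2/2 * (q * x + q^2 * ?K) + 1/mu"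
      using assms s2_pos mu_pos lmax_less_mu by (intro W_mult_le_quadratic) auto
    then show "W s2 mu (q * x) \<le> (s2/2 * q^2 * ?K + 1/mu) + s2/2 * q * x"
      by (simp add: algebra_simps)
  qed (use integrable_W integrable_id assms in auto)
  then show ?thesis
    unfolding expectation_affine by (simp add: algebra_simps)
qed

lemma W_minus_EW_approx:
  assumes "0 \<le> a" "a \<le> lmax" "0 \<le> q" "q \<le> 1"
  shows "\<bar>W s2 mu (q * a) - EW q - s2/2 * (a - mean) * q\<bar> \<le> s2/2 * (lmax^2 / (mu - lmax)) * q^2"
proof -
  have qa: "0 \<le> q * a" "q * a \<le> lmax" using assms mult_mem_range by auto
  have "s2/2 * (q * a) + 1/mu \<le> W s2 mu (q * a)"
    using qa s2_pos mu_pos lmax_less_mu by (intro W_ge_linear) auto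
  moreover have "W s2 mu (q * a) \<le> s2/2 * (q * a + q^2 * (lmax^2 / (mu - lmax))) + 1/mu"
    using assms s2_pos mu_pos lmax_less_mu by (intro W_mult_le_quadratic) auto
  moreover have "s2/2 * q * mean + 1/mu \<le> EW q"
    using assms(3,4) by (rule EW_ge_linear)
  moreover have "EW q \<le> s2/2 * (q * mean + q^2 * (lmax^2 / (mu - lmax))) + 1/mu"
    using assms(3,4) by (rule EW_le_quadratic)
  ultimately show ?thesis
    by (simp add: abs_le_iff algebra_simps)
qed

lemma lambda_bar_root:
  "lambda_bar s2 mu D \<in> {0..<mu} \<and> W s2 mu (lambda_bar s2 mu D) = EW 1"
proof -
  have "0 \<le> s2/2 * 1 * mean" "W s2 mu 0 = 1/mu"
    using s2_pos mean_pos by (simp_all add: W_def)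
  then have "W s2 mu 0 \<le> EW 1"
    using EW_ge_linear[of 1] by linarith
  moreover have "EW 1 \<le> W s2 mu lmax"
  proof -
    have "EW 1 \<le> expectation (\<lambda>_. W s2 mu lmax)"
      unfolding EW_def
    proof (rule expectation_mono_on_range)
      fix x assume "0 \<le> x" "x \<le> lmax"
      then show "W s2 mu (1 * x) \<le> W s2 mu lmax"
        using strict_mono_on_leD[OF strict_mono_on_W[OF mu_pos s2_pos]] lmax_less_mu by simp
    qed (use integrable_W[of 1] in auto)
    then show ?thesis by (simp add: prob_space)
  qed
  moreover have "continuous_on {0..lmax} (W s2 mu)"
    using lmax_less_mu s2_pos by (intro continuous_on_subset[OF continuous_on_W[OF mu_pos]]) auto
  ultimately obtain l where l: "0 \<le> l" "l \<le> lmax" "W s2 mu l = EW 1"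
    using IVT'[of "W s2 mu" 0 "EW 1" lmax] lmax_nonneg by auto
  have "lambda_bar s2 mu D = l"
    unfolding lambda_bar_def
  proof (rule the_equality)
    show "0 \<le> l \<and> l < mu \<and> W s2 mu l = expectation (W s2 mu)"
      using l lmax_less_mu by (simp add: EW_def)
  next
    fix l' assume "0 \<le> l' \<and> l' < mu \<and> W s2 mu l' = expectation (W s2 mu)"
    then show "l' = l"
      using strict_mono_on_eqD[OF strict_mono_on_W[OF mu_pos s2_pos], of l l'] l lmax_less_mu
      by (simp add: EW_def)
  qed
  then show ?thesis using l lmax_less_mu by simp
qed

lemma mean_le_lambda_bar: "mean \<le> lambda_bar s2 mu D"
proof -
  have "W s2 mu mean \<le> W s2 mu (lambda_bar s2 mu D)"
    using W_mean_le_EW[of 1] lambda_bar_root by simp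
  moreover have "mean \<in> {0..<mu}"
    using mean_pos mean_le_lmax lmax_less_mu by simp
  ultimately show ?thesis
    using strict_mono_on_less_eq[OF strict_mono_on_W[OF mu_pos s2_pos]] lambda_bar_root by blast
qed


context
  fixes R C p :: real
  assumes C_pos: "0 < C" and p_less: "p < R - C/mu"
begin

lemma xi_mem: "xi s2 mu R C p \<in> {0<..<mu}"
  using xi_root[OF C_pos mu_pos s2_pos p_less] by simp

lemma W_xi: "C * W s2 mu (xi s2 mu R C p) = R - p"
  using xi_root[OF C_pos mu_pos s2_pos p_less] by simp

lemma expectation_W_le_iff:
  "C * expectation (W s2 mu) \<le> R - p \<longleftrightarrow> lambda_bar s2 mu D \<le> xi s2 mu R C p"
proof -
  have "C * expectation (W s2 mu) \<le> R - p \<longleftrightarrow> W s2 mu (lambda_bar s2 mu D) \<le> W s2 mu (xi s2 mu R C p)"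
    using lambda_bar_root C_pos by (simp add: EW_def flip: W_xi)
  also have "\<dots> \<longleftrightarrow> lambda_bar s2 mu D \<le> xi s2 mu R C p"
    using lambda_bar_root xi_mem by (intro strict_mono_on_less_eq[OF strict_mono_on_W[OF mu_pos s2_pos]]) auto
  finally show ?thesis .
qed

lemma qS_eq_one:
  assumes "lambda_bar s2 mu D \<le> xi s2 mu R C p"
  shows "qS s2 mu R C D p = 1"
  using assms expectation_W_le_iff by (simp add: qS_def)

lemma qS_root:
  assumes "xi s2 mu R C p < lambda_bar s2 mu D"
  shows "qS s2 mu R C D p \<in> {0..<1} \<and> EW (qS s2 mu R C D p) = W s2 mu (xi s2 mu R C p)"
proof -
  let ?w = "W s2 mu (xi s2 mu R C p)"
  have "W s2 mu 0 < ?w"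
    using xi_mem by (intro strict_mono_onD[OF strict_mono_on_W[OF mu_pos s2_pos]]) auto
  moreover have "?w < W s2 mu (lambda_bar s2 mu D)"
    using xi_mem lambda_bar_root assms
    by (intro strict_mono_onD[OF strict_mono_on_W[OF mu_pos s2_pos]]) auto
  ultimately have "EW 0 \<le> ?w" "?w < EW 1"
    using lambda_bar_root by (auto simp: EW_0 W_def)
  then obtain q where q: "0 \<le> q" "q \<le> 1" "EW q = ?w"
    using IVT'[of EW 0 ?w 1] continuous_on_EW by auto
  moreover have "q \<noteq> 1" using q \<open>?w < EW 1\<close> by auto
  ultimately have "q < 1" by simp
  have root_iff: "C * expectation (\<lambda>x. W s2 mu (r * x)) = R - p \<longleftrightarrow> EW r = ?w" for r
    using C_pos by (simp add: EW_def flip: W_xi)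
  have "(THE q. 0 \<le> q \<and> q < 1 \<and> C * expectation (\<lambda>x. W s2 mu (q * x)) = R - p) = q"
    unfolding root_iff
  proof (rule the_equality)
    show "0 \<le> q \<and> q < 1 \<and> EW q = ?w" using q \<open>q < 1\<close> by simp
  next
    fix r assume "0 \<le> r \<and> r < 1 \<and> EW r = ?w"
    then show "r = q"
      using strict_mono_on_eqD[OF strict_mono_on_EW, of q r] q by simp
  qed
  moreover have "\<not> C * expectation (W s2 mu) \<le> R - p"
    using expectation_W_le_iff assms by simp
  ultimately show ?thesis
    using q \<open>q < 1\<close> by (simp add: qS_def)
qed

lemma qS_mem: "qS s2 mu R C D p \<in> {0..1}"
  using qS_eq_one qS_root by (cases "lambda_bar s2 mu D \<le> xi s2 mu R C p") auto

lemma qS_mean_le_xi: "qS s2 mu R C D p * mean \<le> xi s2 mu R C p"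
proof (cases "lambda_bar s2 mu D \<le> xi s2 mu R C p")
  case True
  then show ?thesis using qS_eq_one mean_le_lambda_bar by simp
next
  case False
  let ?q = "qS s2 mu R C D p"
  have q: "?q \<in> {0..<1}" "EW ?q = W s2 mu (xi s2 mu R C p)"
    using qS_root False by auto
  then have "W s2 mu (?q * mean) \<le> W s2 mu (xi s2 mu R C p)"
    using W_mean_le_EW[of ?q] by simp
  moreover have "?q * mean \<in> {0..<mu}"
    using q mult_mem_range[of ?q mean] mean_pos mean_le_lmax lmax_less_mu by auto
  ultimately show ?thesis
    using strict_mono_on_less_eq[OF strict_mono_on_W[OF mu_pos s2_pos]] xi_mem by auto
qed

lemma qS_le_qC_if_le_mean:
  assumes "0 < lam" "lam \<le> mean"
  shows "qS s2 mu R C D p \<le> qC s2 mu R C lam p"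
proof -
  let ?q = "qS s2 mu R C D p"
  have "?q * lam \<le> ?q * mean"
    using qS_mem assms by (intro mult_left_mono) auto
  then have "?q \<le> xi s2 mu R C p / lam"
    using qS_mean_le_xi assms by (simp add: pos_le_divide_eq)
  then show ?thesis
    using qS_mem by (simp add: qC_def)
qed

lemma qS_le_qC_if_le_xi:
  assumes "0 < lam" "lam \<le> xi s2 mu R C p"
  shows "qS s2 mu R C D p \<le> qC s2 mu R C lam p"
  using assms qS_mem by (simp add: qC_def)

lemma qC_le_qS_if_lambda_bar_le_xi:
  assumes "lambda_bar s2 mu D \<le> xi s2 mu R C p"
  shows "qC s2 mu R C lam p \<le> qS s2 mu R C D p"
  using assms qS_eq_one by (simp add: qC_def)

end

lemma RevSq_minus_RevCq:
  assumes "0 \<le> q" "q \<le> 1"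
  shows "RevSq s2 mu R C lam D q - RevCq s2 mu R C lam q = q * lam * C * (W s2 mu (q * lam) - EW q)"
proof -
  have "expectation (\<lambda>x. R - C * W s2 mu (q * x)) = R - C * EW q"
    using integrable_W[OF assms] by (simp add: EW_def prob_space)
  then have "RevSq s2 mu R C lam D q = q * lam * (R - C * EW q)"
    by (simp only: RevSq_def)
  then show ?thesis
    by (simp add: RevCq_def algebra_simps)
qed

lemma RevSq_gt_RevCq_near_0:
  assumes "0 < C" "mean < lam" "lam \<le> lmax"
  shows "\<exists>q0>0. \<forall>q. 0 < q \<and> q < q0 \<longrightarrow> RevSq s2 mu R C lam D q > RevCq s2 mu R C lam q"
proof -
  have "0 < s2/2 * (lam - mean)" using assms s2_pos by simp
  moreover have "\<bar>(W s2 mu (q * lam) - EW q) - s2/2 * (lam - mean) * q\<bar> \<le> s2/2 * (lmax^2 / (mu - lmax)) * q^2"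
    if "0 < q" "q \<le> 1" for q
    using W_minus_EW_approx[of lam q] that assms mean_pos by simp
  ultimately obtain q0 where q0: "q0 \<in> {0<..1}" "\<forall>q\<in>{0<..<q0}. 0 < W s2 mu (q * lam) - EW q"
    using pos_near_0_of_linear_approx[of _ "\<lambda>q. W s2 mu (q * lam) - EW q"] by blast
  have "RevCq s2 mu R C lam q < RevSq s2 mu R C lam D q" if "0 < q" "q < q0" for q
  proof -
    have "0 < q * lam * C * (W s2 mu (q * lam) - EW q)"
      using q0 that assms mean_pos by (intro mult_pos_pos) auto
    moreover have "RevSq s2 mu R C lam D q - RevCq s2 mu R C lam q = q * lam * C * (W s2 mu (q * lam) - EW q)"
      using q0 that by (intro RevSq_minus_RevCq) auto
    ultimately show ?thesis by linarith
  qed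
  then show ?thesis using q0 by auto
qed

lemma RevSq_lt_RevCq_near_0:
  assumes "0 < C" "0 < lam" "lam < mean"
  shows "\<exists>q0>0. \<forall>q. 0 < q \<and> q < q0 \<longrightarrow> RevSq s2 mu R C lam D q < RevCq s2 mu R C lam q"
proof -
  have "0 < s2/2 * (mean - lam)" using assms s2_pos by simp
  moreover have "\<bar>(EW q - W s2 mu (q * lam)) - s2/2 * (mean - lam) * q\<bar> \<le> s2/2 * (lmax^2 / (mu - lmax)) * q^2"
    if "0 < q" "q \<le> 1" for q
  proof -
    have "(EW q - W s2 mu (q * lam)) - s2/2 * (mean - lam) * q = - (W s2 mu (q * lam) - EW q - s2/2 * (lam - mean) * q)"
      by (simp add: algebra_simps)
    then show ?thesis
      using W_minus_EW_approx[of lam q] that assms mean_le_lmax by simp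
  qed
  ultimately obtain q0 where q0: "q0 \<in> {0<..1}" "\<forall>q\<in>{0<..<q0}. 0 < EW q - W s2 mu (q * lam)"
    using pos_near_0_of_linear_approx[of _ "\<lambda>q. EW q - W s2 mu (q * lam)"] by blast
  have "RevSq s2 mu R C lam D q < RevCq s2 mu R C lam q" if "0 < q" "q < q0" for q
  proof -
    have "q * lam * C * (W s2 mu (q * lam) - EW q) < 0"
      using q0 that assms by (intro mult_pos_neg) auto
    moreover have "RevSq s2 mu R C lam D q - RevCq s2 mu R C lam q = q * lam * C * (W s2 mu (q * lam) - EW q)"
      using q0 that by (intro RevSq_minus_RevCq) auto
    ultimately show ?thesis by linarith
  qed
  then show ?thesis using q0 by auto
qed

end


theorem proposition5:
  fixes lam mu s2 R C lmin lmax :: real and D :: "real measure"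
  assumes lam_pos: "lam > 0" and mu_pos: "mu > 0"
    and s2_ge: "s2 \<ge> 1 / mu ^ 2"
    and C_pos: "C > 0" and R_ge: "R \<ge> C / mu"
    and D_prob: "prob_space D" and D_sets: "sets D = sets borel"
    and D_nonneg: "AE x in D. x \<ge> 0"
    and D_nondeg: "\<not> (\<exists>c. AE x in D. x = c)"
    and lmin_supp: "lmin \<in> dist_support D" and lmin_least: "\<forall>x\<in>dist_support D. lmin \<le> x"
    and lmax_supp: "lmax \<in> dist_support D" and lmax_greatest: "\<forall>x\<in>dist_support D. x \<le> lmax"
    and order: "0 \<le> lmin" "lmin < lam" "lam < lmax" "lmax < mu"
  shows
    "(\<forall>p. 0 \<le> p \<and> p < R - C / mu \<longrightarrow>
        ((lam \<le> (\<integral>x. x \<partial>D) \<longrightarrow> RevS s2 mu R C lam D p \<le> RevC s2 mu R C lam p) \<and>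
         ((\<integral>x. x \<partial>D) < lam \<and> lam \<le> lambda_bar s2 mu D \<and> xi s2 mu R C p \<ge> lam \<longrightarrow>
            RevS s2 mu R C lam D p \<le> RevC s2 mu R C lam p) \<and>
         (lam > lambda_bar s2 mu D \<and> xi s2 mu R C p \<ge> lambda_bar s2 mu D \<longrightarrow>
            RevS s2 mu R C lam D p \<ge> RevC s2 mu R C lam p)))
     \<and> (lam > (\<integral>x. x \<partial>D) \<longrightarrow>
          (\<exists>q0>0. \<forall>q. 0 < q \<and> q < q0 \<longrightarrow> RevSq s2 mu R C lam D q > RevCq s2 mu R C lam q))
     \<and> (lam < (\<integral>x. x \<partial>D) \<longrightarrow>
          (\<exists>q0>0. \<forall>q. 0 < q \<and> q < q0 \<longrightarrow> RevSq s2 mu R C lam D q < RevCq s2 mu R C lam q))"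
proof -
  have "0 < 1 / mu^2" using mu_pos by simp
  with s2_ge have s2_pos: "0 < s2" by linarith
  have "AE x in D. x \<le> lmax"
    using AE_le_of_dist_support_le[OF prob_space.finite_measure[OF D_prob] D_sets lmax_greatest] .
  with D_nonneg have "AE x in D. 0 \<le> x \<and> x \<le> lmax" by eventually_elim auto
  then interpret mg1_beliefs D s2 mu lmax
    using D_prob D_sets s2_pos mu_pos order D_nondeg
    by (intro mg1_beliefs.intro mg1_beliefs_axioms.intro) auto
  have RevS_le: "RevS s2 mu R C lam D p \<le> RevC s2 mu R C lam p"
    if "0 \<le> p" "qS s2 mu R C D p \<le> qC s2 mu R C lam p" for p
    unfolding RevS_def RevC_def using that lam_pos by (intro mult_left_mono) auto
  have RevC_le: "RevC s2 mu R C lam p \<le> RevS s2 mu R C lam D p"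
    if "0 \<le> p" "qC s2 mu R C lam p \<le> qS s2 mu R C D p" for p
    unfolding RevS_def RevC_def using that lam_pos by (intro mult_left_mono) auto
  show ?thesis
    using RevS_le RevC_le qS_le_qC_if_le_mean[OF C_pos] qS_le_qC_if_le_xi[OF C_pos]
      qC_le_qS_if_lambda_bar_le_xi[OF C_pos] RevSq_gt_RevCq_near_0[OF C_pos]
      RevSq_lt_RevCq_near_0[OF C_pos] lam_pos order
    by (auto simp: less_imp_le)
qed

end
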